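(* Let $\Delta$ be a simplicial forest. Then the greatest common divisor of the maximal minors of the incidence matrix of $\Delta$ is $1$.
   Context: A simplicial complex $\Delta$ is a collection of subsets (faces) of a finite vertex set closed under taking subsets; facets are maximal faces; write $\Delta=\langle F_1,\dots,F_s\rangle$ when $F_1,\dots,F_s$ are the facets. The incidence matrix of $\Delta=\langle F_1,\dots,F_s\rangle$ with vertices $v_1,\dots,v_n$ is the $s\times n$ matrix whose $(i,j)$ entry is $1$ if $v_j\in F_i$ and $0$ otherwise. A facet $F$ of $\Delta$ is a leaf if either $F$ is the only facet of $\Delta$, or there is a facet $G\neq F$ of $\Delta$ with $F\cap F'\subseteq F\cap G$ for every facet $F'\neq F$ of $\Delta$. $\Delta$ is a simplicial tree if $\Delta$ is connected and every subcomplex $\langle F_{i_1},\dots,F_{i_r}\rangle$ generated by a nonempty subset of the facets has a leaf; $\Delta$ is a simplicial forest if every connected component of $\Delta$ is a simplicial tree. *)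

theory Defs
  imports Main "Jordan_Normal_Form.Determinant" "Jordan_Normal_Form.DL_Submatrix"
begin

definition simplicial_complex :: "'a set set \<Rightarrow> bool" where
  "simplicial_complex \<Delta> \<longleftrightarrow> finite (\<Union>\<Delta>) \<and> (\<forall>F\<in>\<Delta>. \<forall>G. G \<subseteq> F \<longrightarrow> G \<in> \<Delta>)"

definition vertices :: "'a set set \<Rightarrow> 'a set" where
  "vertices \<Delta> = \<Union>\<Delta>"

definition facets :: "'a set set \<Rightarrow> 'a set set" where
  "facets \<Delta> = {F \<in> \<Delta>. \<forall>G\<in>\<Delta>. F \<subseteq> G \<longrightarrow> G = F}"

definition is_leaf :: "'a set set \<Rightarrow> 'a set \<Rightarrow> bool" where
  "is_leaf \<F> F \<longleftrightarrow> F \<in> \<F> \<and>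
     (\<F> = {F} \<or> (\<exists>G\<in>\<F>. G \<noteq> F \<and> (\<forall>F'\<in>\<F>. F' \<noteq> F \<longrightarrow> F \<inter> F' \<subseteq> F \<inter> G)))"

text \<open>Two facets are adjacent if they share a vertex; connectivity of the complex generated
  by a facet set is connectivity of this relation (a chain of pairwise intersecting facets).\<close>
definition facet_adj :: "'a set set \<Rightarrow> ('a set \<times> 'a set) set" where
  "facet_adj \<F> = {(F, G). F \<in> \<F> \<and> G \<in> \<F> \<and> F \<inter> G \<noteq> {}}"

definition connected_facets :: "'a set set \<Rightarrow> bool" where
  "connected_facets \<F> \<longleftrightarrow> (\<forall>F\<in>\<F>. \<forall>G\<in>\<F>. (F, G) \<in> (facet_adj \<F>)\<^sup>*)"

definition components :: "'a set set \<Rightarrow> 'a set set set" where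
  "components \<F> = {{G \<in> \<F>. (F, G) \<in> (facet_adj \<F>)\<^sup>*} | F. F \<in> \<F>}"

definition simplicial_tree_facets :: "'a set set \<Rightarrow> bool" where
  "simplicial_tree_facets \<F> \<longleftrightarrow> connected_facets \<F> \<and>
     (\<forall>\<G>. \<G> \<subseteq> \<F> \<and> \<G> \<noteq> {} \<longrightarrow> (\<exists>F. is_leaf \<G> F))"

definition simplicial_forest :: "'a set set \<Rightarrow> bool" where
  "simplicial_forest \<Delta> \<longleftrightarrow> (\<forall>C \<in> components (facets \<Delta>). simplicial_tree_facets C)"

definition incidence_matrix :: "'a set list \<Rightarrow> 'a list \<Rightarrow> int mat" where
  "incidence_matrix Fs vs =
     mat (length Fs) (length vs) (\<lambda>(i, j). if vs ! j \<in> Fs ! i then 1 else 0)"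

definition maximal_minors :: "int mat \<Rightarrow> int set" where
  "maximal_minors A =
     {det (submatrix A I J) | I J. I \<subseteq> {0..<dim_row A} \<and> J \<subseteq> {0..<dim_col A} \<and>
        card I = min (dim_row A) (dim_col A) \<and> card J = min (dim_row A) (dim_col A)}"

end

theory Submission
  imports Defs
begin

text \<open>
  Every nonempty set \<open>R\<close> of facets of a simplicial forest contains a facet with a vertex that
  lies in no other facet of \<open>R\<close>: take a leaf of the part of \<open>R\<close> inside one connected component,
  which shares no vertex with the facets outside that component. By induction, the
  facets then have a system of distinct representatives \<open>\<sigma>\<close> which is the only one with image
  \<open>\<sigma>(facets)\<close>. In the square submatrix of the incidence matrix on the columns \<open>\<sigma>(facets)\<close>,
  a permutation contributes to the Leibniz expansion of the determinant only if it is a system of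
  distinct representatives, so exactly one term survives and the minor is \<open>\<plusminus>1\<close>.
\<close>

lemma unique_sdr_if_private_elements:
  fixes S :: "'i \<Rightarrow> 'v set"
  assumes "finite I"
    and "\<And>R. R \<subseteq> I \<Longrightarrow> R \<noteq> {} \<Longrightarrow> \<exists>x\<in>R. \<exists>v\<in>S x. \<forall>y\<in>R - {x}. v \<notin> S y"
  shows "\<exists>\<sigma>. inj_on \<sigma> I \<and> (\<forall>x\<in>I. \<sigma> x \<in> S x) \<and>
           (\<forall>\<rho>. \<rho> ` I = \<sigma> ` I \<and> (\<forall>x\<in>I. \<rho> x \<in> S x) \<longrightarrow> (\<forall>x\<in>I. \<rho> x = \<sigma> x))"
  using assms
proof (induction I rule: finite_remove_induct)
  case empty
  then show ?case by simp
next
  case (remove A)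
  obtain x0 v where x0: "x0 \<in> A" and v: "v \<in> S x0" and v_private: "\<forall>y\<in>A - {x0}. v \<notin> S y"
    using remove.prems[of A] \<open>A \<noteq> {}\<close> by blast
  have sub_private: "\<And>R. R \<subseteq> A - {x0} \<Longrightarrow> R \<noteq> {} \<Longrightarrow> \<exists>x\<in>R. \<exists>v\<in>S x. \<forall>y\<in>R - {x}. v \<notin> S y"
    using remove.prems by blast
  obtain \<sigma> where inj: "inj_on \<sigma> (A - {x0})" and sdr: "\<forall>x\<in>A - {x0}. \<sigma> x \<in> S x"
    and unique: "\<forall>\<rho>. \<rho> ` (A - {x0}) = \<sigma> ` (A - {x0}) \<and> (\<forall>x\<in>A - {x0}. \<rho> x \<in> S x)
                   \<longrightarrow> (\<forall>x\<in>A - {x0}. \<rho> x = \<sigma> x)"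
    using remove.IH[OF x0 sub_private] by blast
  define \<tau> where "\<tau> = \<sigma>(x0 := v)"
  have v_fresh: "v \<notin> \<sigma> ` (A - {x0})"
    using sdr v_private by auto
  have \<tau>_image: "\<tau> ` A = insert v (\<sigma> ` (A - {x0}))"
    using x0 unfolding \<tau>_def by (auto simp: image_iff)
  have "inj_on \<tau> A"
  proof -
    have "inj_on \<tau> (A - {x0})"
      using inj unfolding \<tau>_def inj_on_def by simp
    moreover have "\<tau> x0 \<notin> \<tau> ` (A - {x0})"
      using v_fresh unfolding \<tau>_def by simp
    ultimately show ?thesis
      using x0 inj_on_insert[of \<tau> x0 "A - {x0}"] by (simp add: insert_absorb)
  qed
  moreover have "\<forall>x\<in>A. \<tau> x \<in> S x"
    using sdr v unfolding \<tau>_def by simp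
  moreover have "\<forall>x\<in>A. \<rho> x = \<tau> x" if \<rho>_image: "\<rho> ` A = \<tau> ` A" and \<rho>_sdr: "\<forall>x\<in>A. \<rho> x \<in> S x" for \<rho>
  proof -
    have \<rho>_ne_v: "\<rho> y \<noteq> v" if "y \<in> A - {x0}" for y
      using that \<rho>_sdr v_private by blast
    have "v \<in> \<rho> ` A"
      using \<rho>_image \<tau>_image by simp
    then have \<rho>_x0: "\<rho> x0 = v"
      using \<rho>_ne_v by blast
    have "\<rho> ` (A - {x0}) = \<rho> ` A - {v}"
      using \<rho>_ne_v \<rho>_x0 x0 by blast
    also have "\<dots> = \<sigma> ` (A - {x0})"
      using \<rho>_image \<tau>_image v_fresh by simp
    finally have "\<forall>x\<in>A - {x0}. \<rho> x = \<sigma> x"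
      using unique \<rho>_sdr by blast
    then show ?thesis
      using \<rho>_x0 unfolding \<tau>_def by simp
  qed
  ultimately show ?case by blast
qed

lemma det_eq_signof_if_unique_nonvanishing_perm:
  fixes M :: "'a :: comm_ring_1 mat"
  assumes M: "M \<in> carrier_mat n n" and p0: "p0 permutes {0..<n}"
    and diag: "\<And>i. i < n \<Longrightarrow> M $$ (i, p0 i) = 1"
    and unique: "\<And>p. p permutes {0..<n} \<Longrightarrow> p \<noteq> p0 \<Longrightarrow> \<exists>i<n. M $$ (i, p i) = 0"
  shows "det M = signof p0"
proof -
  let ?term = "\<lambda>p. signof p * (\<Prod>i = 0..<n. M $$ (i, p i))"
  have "det M = (\<Sum>p\<in>{p. p permutes {0..<n}}. ?term p)"
    using det_def'[OF M] by simp
  also have "\<dots> = (\<Sum>p\<in>{p0}. ?term p)"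
  proof (rule sum.mono_neutral_right)
    show "\<forall>p\<in>{p. p permutes {0..<n}} - {p0}. ?term p = 0"
    proof
      fix p assume "p \<in> {p. p permutes {0..<n}} - {p0}"
      then obtain i where "i < n" "M $$ (i, p i) = 0"
        using unique by blast
      then have "(\<Prod>i = 0..<n. M $$ (i, p i)) = 0"
        by (intro prod_zero) auto
      then show "?term p = 0"
        by simp
    qed
  qed (use p0 finite_permutations in auto)
  also have "\<dots> = signof p0"
    using diag by simp
  finally show ?thesis .
qed

lemma pick_atLeastLessThan: "i < n \<Longrightarrow> pick {0..<n} i = i"
  using pick_reduce_set[of i n UNIV] by (simp add: pick_UNIV atLeast0LessThan lessThan_def)

lemma bij_betw_pick: "finite J \<Longrightarrow> bij_betw (pick J) {0..<card J} J"
proof (rule bij_betw_imageI)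
  show "inj_on (pick J) {0..<card J}"
    by (rule inj_onI) (metis atLeastLessThan_iff card_pick)
  assume "finite J"
  have "pick J ` {0..<card J} \<subseteq> J"
    using pick_in_set by auto
  moreover have "card (pick J ` {0..<card J}) = card J"
    using card_image \<open>inj_on (pick J) {0..<card J}\<close> by fastforce
  ultimately show "pick J ` {0..<card J} = J"
    using \<open>finite J\<close> by (simp add: card_subset_eq)
qed

lemma submatrix_all_rows:
  assumes "A \<in> carrier_mat s n" and "J \<subseteq> {0..<n}"
  shows submatrix_all_rows_carrier: "submatrix A {0..<s} J \<in> carrier_mat s (card J)"
    and submatrix_all_rows_index:
      "\<And>i k. i < s \<Longrightarrow> k < card J \<Longrightarrow> submatrix A {0..<s} J $$ (i, k) = A $$ (i, pick J k)"
proof -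
  have rows: "{i. i < dim_row A \<and> i \<in> {0..<s}} = {0..<s}" and cols: "{j. j < dim_col A \<and> j \<in> J} = J"
    using assms by auto
  show "submatrix A {0..<s} J \<in> carrier_mat s (card J)"
    using dim_submatrix[of A "{0..<s}" J] by (intro carrier_matI) (simp_all only: rows cols card_atLeastLessThan diff_zero)
  show "submatrix A {0..<s} J $$ (i, k) = A $$ (i, pick J k)" if "i < s" "k < card J" for i k
    using submatrix_index[of i A "{0..<s}" k J] that
    unfolding rows cols by (simp add: pick_atLeastLessThan)
qed

lemma permutes_factor_bij_betw:
  assumes f: "bij_betw f A B" and g: "bij_betw g A B"
  obtains p where "p permutes A" and "\<And>x. x \<in> A \<Longrightarrow> f (p x) = g x"
proof
  define p where "p x = (if x \<in> A then the_inv_into A f (g x) else x)" for x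
  have "bij_betw (the_inv_into A f \<circ> g) A A"
    using bij_betw_trans[OF g bij_betw_the_inv_into[OF f]] .
  then have "bij_betw p A A"
    by (rule bij_betw_cong[THEN iffD1, rotated]) (simp add: p_def)
  then show "p permutes A"
    by (rule bij_imp_permutes) (simp add: p_def)
  show "f (p x) = g x" if "x \<in> A" for x
    using that f_the_inv_into_f_bij_betw[OF f] bij_betwE[OF g] by (simp add: p_def)
qed

lemma signof_in_one_minus_one: "(signof p :: 'a :: ring_1) \<in> {1, -1}"
  by (cases p rule: sign_cases) simp_all

lemma det_submatrix_in_one_minus_one_if_unique_sdr:
  fixes A :: "'a :: comm_ring_1 mat"
  assumes A: "A \<in> carrier_mat s n"
    and zero_one: "\<And>i j. i < s \<Longrightarrow> j < n \<Longrightarrow> A $$ (i, j) = 0 \<or> A $$ (i, j) = 1"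
    and \<sigma>_inj: "inj_on \<sigma> {0..<s}" and \<sigma>_less: "\<And>i. i < s \<Longrightarrow> \<sigma> i < n"
    and \<sigma>_sdr: "\<And>i. i < s \<Longrightarrow> A $$ (i, \<sigma> i) = 1"
    and \<sigma>_unique: "\<And>\<rho>. \<rho> ` {0..<s} = \<sigma> ` {0..<s} \<Longrightarrow> (\<And>i. i < s \<Longrightarrow> A $$ (i, \<rho> i) = 1) \<Longrightarrow>
      \<forall>i<s. \<rho> i = \<sigma> i"
  shows "det (submatrix A {0..<s} (\<sigma> ` {0..<s})) \<in> {1, -1}"
proof -
  define J where "J = \<sigma> ` {0..<s}"
  have J_sub: "J \<subseteq> {0..<n}"
    using \<sigma>_less unfolding J_def by auto
  have card_J: "card J = s"
    using card_image[OF \<sigma>_inj] unfolding J_def by simp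
  define M where "M = submatrix A {0..<s} J"
  have M: "M \<in> carrier_mat s s"
    using submatrix_all_rows_carrier[OF A J_sub] card_J unfolding M_def by simp
  have M_index: "M $$ (i, k) = A $$ (i, pick J k)" if "i < s" "k < s" for i k
    using submatrix_all_rows_index[OF A J_sub] that card_J unfolding M_def by simp
  have pick_bij: "bij_betw (pick J) {0..<s} J"
    using bij_betw_pick[of J] card_J J_sub finite_subset by fastforce
  have \<sigma>_bij: "bij_betw \<sigma> {0..<s} J"
    unfolding J_def using \<sigma>_inj by (rule inj_on_imp_bij_betw)
  obtain p0 where p0: "p0 permutes {0..<s}" and pick_p0: "\<And>i. i \<in> {0..<s} \<Longrightarrow> pick J (p0 i) = \<sigma> i"
    using permutes_factor_bij_betw[OF pick_bij \<sigma>_bij] by blast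
  have "det M = signof p0"
  proof (rule det_eq_signof_if_unique_nonvanishing_perm[OF M p0])
    show "M $$ (i, p0 i) = 1" if "i < s" for i
      using that M_index permutes_in_image[OF p0] pick_p0 \<sigma>_sdr by simp
    show "\<exists>i<s. M $$ (i, p i) = 0" if p: "p permutes {0..<s}" and "p \<noteq> p0" for p
    proof (rule ccontr)
      assume nonvanishing: "\<not> (\<exists>i<s. M $$ (i, p i) = 0)"
      have "A $$ (i, pick J (p i)) = 1" if "i < s" for i
      proof -
        have p_i: "p i < s"
          using that permutes_in_image[OF p] by simp
        have "M $$ (i, p i) \<noteq> 0"
          using nonvanishing that by simp
        then have "A $$ (i, pick J (p i)) \<noteq> 0"
          using M_index[OF that p_i] by simp
        moreover have "pick J (p i) < n"
          using p_i bij_betwE[OF pick_bij] J_sub by fastforce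
        ultimately show ?thesis
          using zero_one[OF that] by blast
      qed
      moreover have "(pick J \<circ> p) ` {0..<s} = \<sigma> ` {0..<s}"
        unfolding image_comp[symmetric] permutes_image[OF p] bij_betw_imp_surj_on[OF pick_bij]
        by (fact J_def)
      ultimately have "\<forall>i<s. pick J (p i) = pick J (p0 i)"
        using \<sigma>_unique[of "pick J \<circ> p"] pick_p0 by simp
      then have "\<forall>i<s. p i = p0 i"
        using bij_betw_imp_inj_on[OF pick_bij] permutes_in_image[OF p] permutes_in_image[OF p0]
        unfolding inj_on_def by simp
      then have "p = p0"
        using permutes_not_in[OF p] permutes_not_in[OF p0] by (intro ext) (metis atLeastLessThan_iff)
      with \<open>p \<noteq> p0\<close> show False ..
    qed
  qed
  then show ?thesis
    using signof_in_one_minus_one unfolding M_def J_def by simp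
qed

lemma zero_one_mat_minor_in_one_minus_one_if_private_columns:
  fixes A :: "'a :: comm_ring_1 mat"
  assumes A: "A \<in> carrier_mat s n"
    and zero_one: "\<And>i j. i < s \<Longrightarrow> j < n \<Longrightarrow> A $$ (i, j) = 0 \<or> A $$ (i, j) = 1"
    and private_column: "\<And>R. R \<subseteq> {0..<s} \<Longrightarrow> R \<noteq> {} \<Longrightarrow>
      \<exists>i\<in>R. \<exists>j<n. A $$ (i, j) = 1 \<and> (\<forall>i'\<in>R - {i}. A $$ (i', j) = 0)"
  obtains J where "J \<subseteq> {0..<n}" and "card J = s" and "det (submatrix A {0..<s} J) \<in> {1, -1}"
proof -
  define S where "S i = {j. j < n \<and> A $$ (i, j) = 1}" for i
  have "\<exists>\<sigma>. inj_on \<sigma> {0..<s} \<and> (\<forall>i\<in>{0..<s}. \<sigma> i \<in> S i) \<and>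
          (\<forall>\<rho>. \<rho> ` {0..<s} = \<sigma> ` {0..<s} \<and> (\<forall>i\<in>{0..<s}. \<rho> i \<in> S i) \<longrightarrow> (\<forall>i\<in>{0..<s}. \<rho> i = \<sigma> i))"
  proof (rule unique_sdr_if_private_elements)
    fix R assume "R \<subseteq> {0..<s}" "R \<noteq> {}"
    then obtain i j where "i \<in> R" "j < n" "A $$ (i, j) = 1" "\<forall>i'\<in>R - {i}. A $$ (i', j) = 0"
      using private_column by blast
    then have "j \<in> S i" "\<forall>i'\<in>R - {i}. j \<notin> S i'"
      unfolding S_def by auto
    with \<open>i \<in> R\<close> show "\<exists>i\<in>R. \<exists>j\<in>S i. \<forall>i'\<in>R - {i}. j \<notin> S i'"
      by blast
  qed simp
  then obtain \<sigma> where \<sigma>_inj: "inj_on \<sigma> {0..<s}" and \<sigma>_sdr: "\<forall>i\<in>{0..<s}. \<sigma> i \<in> S i"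
    and \<sigma>_unique: "\<forall>\<rho>. \<rho> ` {0..<s} = \<sigma> ` {0..<s} \<and> (\<forall>i\<in>{0..<s}. \<rho> i \<in> S i) \<longrightarrow> (\<forall>i\<in>{0..<s}. \<rho> i = \<sigma> i)"
    by blast
  have \<sigma>_less: "\<sigma> i < n" if "i < s" for i
    using that \<sigma>_sdr unfolding S_def by simp
  have "det (submatrix A {0..<s} (\<sigma> ` {0..<s})) \<in> {1, -1}"
  proof (rule det_submatrix_in_one_minus_one_if_unique_sdr[OF A zero_one \<sigma>_inj \<sigma>_less])
    show "A $$ (i, \<sigma> i) = 1" if "i < s" for i
      using that \<sigma>_sdr unfolding S_def by simp
    show "\<forall>i<s. \<rho> i = \<sigma> i"
      if \<rho>_image: "\<rho> ` {0..<s} = \<sigma> ` {0..<s}" and \<rho>_sdr: "\<And>i. i < s \<Longrightarrow> A $$ (i, \<rho> i) = 1" for \<rho>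
    proof -
      have "\<rho> i < n" if "i < s" for i
      proof -
        have "\<rho> i \<in> \<sigma> ` {0..<s}"
          using that by (simp flip: \<rho>_image)
        then show ?thesis
          using \<sigma>_less by auto
      qed
      then have "\<forall>i\<in>{0..<s}. \<rho> i \<in> S i"
        using \<rho>_sdr unfolding S_def by simp
      then have "\<forall>i\<in>{0..<s}. \<rho> i = \<sigma> i"
        using \<sigma>_unique \<rho>_image by blast
      then show ?thesis
        by simp
    qed
  qed
  moreover have "\<sigma> ` {0..<s} \<subseteq> {0..<n}" and "card (\<sigma> ` {0..<s}) = s"
    using \<sigma>_less card_image[OF \<sigma>_inj] by auto
  ultimately show thesis
    using that by blast
qed

lemma Gcd_maximal_minors_eq_1I:
  assumes "I \<subseteq> {0..<dim_row A}" and "J \<subseteq> {0..<dim_col A}"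
    and "card I = min (dim_row A) (dim_col A)" and "card J = min (dim_row A) (dim_col A)"
    and "det (submatrix A I J) \<in> {1, -1}"
  shows "Gcd (maximal_minors A) = 1"
proof (rule Gcd_eq_1_I)
  show "is_unit (det (submatrix A I J))"
    using assms(5) by auto
  show "det (submatrix A I J) \<in> maximal_minors A"
    using assms(1-4) unfolding maximal_minors_def by blast
qed

lemma leaf_private_vertex:
  assumes leaf: "is_leaf \<G> F" and "F \<noteq> {}" and antichain: "\<And>G. G \<in> \<G> \<Longrightarrow> F \<subseteq> G \<Longrightarrow> G = F"
  shows "\<exists>v\<in>F. \<forall>F'\<in>\<G> - {F}. v \<notin> F'"
proof -
  from leaf consider "\<G> = {F}"
    | G where "G \<in> \<G>" "G \<noteq> F" "\<forall>F'\<in>\<G>. F' \<noteq> F \<longrightarrow> F \<inter> F' \<subseteq> F \<inter> G"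
    unfolding is_leaf_def by blast
  then show ?thesis
  proof cases
    case 1
    then show ?thesis
      using \<open>F \<noteq> {}\<close> by auto
  next
    case (2 G)
    then obtain v where "v \<in> F" "v \<notin> G"
      using antichain by blast
    with 2 show ?thesis
      by blast
  qed
qed

lemma simplicial_forest_private_vertex:
  assumes forest: "simplicial_forest \<Delta>" and R: "R \<subseteq> facets \<Delta>" "R \<noteq> {}"
    and nonempty: "{} \<notin> facets \<Delta>"
  shows "\<exists>F\<in>R. \<exists>v\<in>F. \<forall>F'\<in>R - {F}. v \<notin> F'"
proof -
  obtain F0 where F0: "F0 \<in> R"
    using R by blast
  define C where "C = {G \<in> facets \<Delta>. (F0, G) \<in> (facet_adj (facets \<Delta>))\<^sup>*}"
  have "C \<in> components (facets \<Delta>)"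
    unfolding components_def C_def using F0 R by blast
  then have tree: "simplicial_tree_facets C"
    using forest unfolding simplicial_forest_def by blast
  have C_closed: "F' \<in> C" if "F \<in> C" "F' \<in> facets \<Delta>" "F \<inter> F' \<noteq> {}" for F F'
  proof -
    have "(F, F') \<in> facet_adj (facets \<Delta>)"
      using that unfolding facet_adj_def C_def by auto
    moreover have "(F0, F) \<in> (facet_adj (facets \<Delta>))\<^sup>*"
      using that(1) unfolding C_def by simp
    ultimately show ?thesis
      using that(2) unfolding C_def by (simp add: rtrancl_into_rtrancl)
  qed
  have "R \<inter> C \<subseteq> C" "R \<inter> C \<noteq> {}"
    using F0 R unfolding C_def by auto
  then obtain F where leaf: "is_leaf (R \<inter> C) F"
    using tree unfolding simplicial_tree_facets_def by blast
  then have F: "F \<in> R" "F \<in> C"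
    unfolding is_leaf_def by auto
  have F_facet: "F \<in> facets \<Delta>"
    using F R by blast
  then have "F \<noteq> {}"
    using nonempty by blast
  moreover have "G = F" if "G \<in> R \<inter> C" "F \<subseteq> G" for G
    using that F_facet R unfolding facets_def by blast
  ultimately obtain v where v: "v \<in> F" and v_private: "\<forall>F'\<in>R \<inter> C - {F}. v \<notin> F'"
    using leaf_private_vertex[OF leaf] by blast
  have "v \<notin> F'" if "F' \<in> R - {F}" for F'
    using that v v_private C_closed[OF F(2), of F'] R by blast
  with F v show ?thesis
    by blast
qed

lemma incidence_matrix_carrier: "incidence_matrix Fs vs \<in> carrier_mat (length Fs) (length vs)"
  unfolding incidence_matrix_def by simp

lemma incidence_matrix_index:
  "i < length Fs \<Longrightarrow> j < length vs \<Longrightarrow>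
    incidence_matrix Fs vs $$ (i, j) = (if vs ! j \<in> Fs ! i then 1 else 0)"
  unfolding incidence_matrix_def by simp

lemma incidence_matrix_private_column:
  assumes "distinct Fs" and "\<Union>(set Fs) \<subseteq> set vs" and R: "R \<subseteq> {0..<length Fs}"
    and "\<exists>F\<in>(!) Fs ` R. \<exists>v\<in>F. \<forall>F'\<in>(!) Fs ` R - {F}. v \<notin> F'"
  shows "\<exists>i\<in>R. \<exists>j<length vs. incidence_matrix Fs vs $$ (i, j) = 1 \<and>
           (\<forall>i'\<in>R - {i}. incidence_matrix Fs vs $$ (i', j) = 0)"
proof -
  obtain F v where F: "F \<in> (!) Fs ` R" and v: "v \<in> F" and v_private: "\<forall>F'\<in>(!) Fs ` R - {F}. v \<notin> F'"
    using assms(4) by blast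
  then obtain i where i: "i \<in> R" "F = Fs ! i"
    by blast
  have i_less: "i < length Fs"
    using i R by auto
  then have "v \<in> set vs"
    using v i assms(2) nth_mem by blast
  then obtain j where j: "j < length vs" "vs ! j = v"
    by (meson in_set_conv_nth)
  have "incidence_matrix Fs vs $$ (i, j) = 1"
    using i i_less j v by (simp add: incidence_matrix_index)
  moreover have "incidence_matrix Fs vs $$ (i', j) = 0" if "i' \<in> R - {i}" for i'
  proof -
    have i'_less: "i' < length Fs"
      using that R by auto
    then have "Fs ! i' \<noteq> F"
      using that i i_less nth_eq_iff_index_eq[OF assms(1)] by simp
    then have "v \<notin> Fs ! i'"
      using that v_private by blast
    then show ?thesis
      using i'_less j by (simp add: incidence_matrix_index)
  qed
  ultimately show ?thesis
    using i(1) j(1) by blast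
qed

lemma Gcd_maximal_minors_eq_1_if_dim_col_0:
  assumes "dim_col A = 0"
  shows "Gcd (maximal_minors A) = 1"
proof (rule Gcd_maximal_minors_eq_1I[of "{}" A "{}"])
  have "submatrix A {} {} \<in> carrier_mat 0 0"
    by (rule carrier_matI) (simp_all add: dim_submatrix)
  then show "det (submatrix A {} {}) \<in> {1, -1}"
    by simp
qed (use assms in simp_all)

lemma Gcd_maximal_minors_incidence_matrix_eq_1I:
  assumes "distinct Fs" and "\<Union>(set Fs) \<subseteq> set vs"
    and private_vertex: "\<And>\<R>. \<R> \<subseteq> set Fs \<Longrightarrow> \<R> \<noteq> {} \<Longrightarrow> \<exists>F\<in>\<R>. \<exists>v\<in>F. \<forall>F'\<in>\<R> - {F}. v \<notin> F'"
  shows "Gcd (maximal_minors (incidence_matrix Fs vs)) = 1"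
proof -
  let ?A = "incidence_matrix Fs vs"
  note A = incidence_matrix_carrier[of Fs vs]
  have zero_one: "?A $$ (i, j) = 0 \<or> ?A $$ (i, j) = 1" if "i < length Fs" "j < length vs" for i j
    using that by (simp add: incidence_matrix_index)
  have "\<exists>F\<in>(!) Fs ` R. \<exists>v\<in>F. \<forall>F'\<in>(!) Fs ` R - {F}. v \<notin> F'"
    if "R \<subseteq> {0..<length Fs}" "R \<noteq> {}" for R
    using that nth_mem by (intro private_vertex) fastforce+
  then obtain J where J: "J \<subseteq> {0..<length vs}" "card J = length Fs"
    and det: "det (submatrix ?A {0..<length Fs} J) \<in> {1, -1}"
    using zero_one_mat_minor_in_one_minus_one_if_private_columns[OF A zero_one]
      incidence_matrix_private_column[OF assms(1,2)] by metis
  have "length Fs \<le> length vs"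
    using J card_mono[of "{0..<length vs}" J] by simp
  then show ?thesis
    using A J det by (intro Gcd_maximal_minors_eq_1I) auto
qed

theorem proposition2p6:
  fixes \<Delta> :: "'a set set" and Fs :: "'a set list" and vs :: "'a list"
  assumes "simplicial_complex \<Delta>"
    and "simplicial_forest \<Delta>"
    and "distinct Fs" and "set Fs = facets \<Delta>"
    and "distinct vs" and "set vs = vertices \<Delta>"
  shows "Gcd (maximal_minors (incidence_matrix Fs vs)) = 1"
proof (cases "{} \<in> facets \<Delta>")
  case True
  \<comment> \<open>Then \<open>\<Delta> = {{}}\<close> and the incidence matrix has no columns.\<close>
  then have "vertices \<Delta> = {}"
    unfolding facets_def vertices_def by blast
  then show ?thesis
    using assms(6) by (simp add: Gcd_maximal_minors_eq_1_if_dim_col_0 incidence_matrix_def)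
next
  case False
  show ?thesis
  proof (rule Gcd_maximal_minors_incidence_matrix_eq_1I[OF assms(3)])
    show "\<Union>(set Fs) \<subseteq> set vs"
      using assms(4,6) unfolding facets_def vertices_def by blast
    show "\<exists>F\<in>\<R>. \<exists>v\<in>F. \<forall>F'\<in>\<R> - {F}. v \<notin> F'" if "\<R> \<subseteq> set Fs" "\<R> \<noteq> {}" for \<R>
      using simplicial_forest_private_vertex[OF assms(2) _ that(2) False] that(1) assms(4) by blast
  qed
qed

end
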